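(* Fix an instance of the data in the context and a cycle basis of the network graph $(\mathcal B,\mathcal L)$. For each cycle $C$ of the basis, with buses labeled $1,\dots,n$ in cyclic order ($n=|C|$) and oriented edges $(1,2),\dots,(n-1,n),(n,1)$, impose: (1) if $n=3$: $s_{12}c_{33}+c_{23}s_{31}+s_{23}c_{31}=0$ and $c_{12}c_{33}-c_{23}c_{31}+s_{23}s_{31}=0$; (2) if $n=4$: $s_{12}c_{34}+c_{12}s_{34}+s_{23}c_{41}+c_{23}s_{41}=0$ and $c_{12}c_{34}-s_{12}s_{34}-c_{23}c_{41}+s_{23}s_{41}=0$; (3) if $n\ge5$ is odd: auxiliary real variables $\tilde c_{1,2i},\tilde s_{1,2i}$ for $i=2,\dots,\frac{n-1}{2}$, with $\tilde c_{12}=c_{12}$, $\tilde s_{12}=s_{12}$, and constraints, for $i=2,\dots,\frac{n-1}{2}$: $\tilde c_{1,2i-2}c_{2i-1,2i}-\tilde s_{1,2i-2}s_{2i-1,2i}-\tilde c_{1,2i}c_{2i-2,2i-1}-\tilde s_{1,2i}s_{2i-2,2i-1}=0$, $\tilde s_{1,2i-2}c_{2i-1,2i}+\tilde c_{1,2i-2}s_{2i-1,2i}-\tilde s_{1,2i}c_{2i-2,2i-1}+\tilde c_{1,2i}s_{2i-2,2i-1}=0$; and $\tilde c_{1,n-1}c_{n-1,n}-\tilde s_{1,n-1}s_{n-1,n}-c_{n,1}c_{n-1,n-1}=0$, $\tilde s_{1,n-1}c_{n-1,n}+\tilde c_{1,n-1}s_{n-1,n}+s_{n,1}c_{n-1,n-1}=0$;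 $\tilde s_{1,i}^2+\tilde c_{1,i}^2=c_{11}c_{ii}$ for every even $i$ with $2\le i\le n-1$; and $c_{ij}^2+s_{ij}^2=c_{ii}c_{jj}$ for every edge $(i,j)$ of $C$; (4) if $n\ge6$ is even: auxiliary real variables $\tilde c_{1,2i},\tilde s_{1,2i}$ for $i=2,\dots,\frac n2-1$, with $\tilde c_{12}=c_{12}$, $\tilde s_{12}=s_{12}$, $\tilde c_{1,n}=c_{1,n}$, $\tilde s_{1,n}=s_{1,n}$, and constraints, for $i=2,\dots,\frac n2$: $\tilde c_{1,2i-2}c_{2i-1,2i}-\tilde s_{1,2i-2}s_{2i-1,2i}-\tilde c_{1,2i}c_{2i-2,2i-1}-\tilde s_{1,2i}s_{2i-2,2i-1}=0$, $\tilde s_{1,2i-2}c_{2i-1,2i}+\tilde c_{1,2i-2}s_{2i-1,2i}-\tilde s_{1,2i}c_{2i-2,2i-1}+\tilde c_{1,2i}s_{2i-2,2i-1}=0$; $\tilde s_{1,i}^2+\tilde c_{1,i}^2=c_{11}c_{ii}$ for every even $i$ with $2\le i\le n-1$; and $c_{ij}^2+s_{ij}^2=c_{ii}c_{jj}$ for every edge $(i,j)$ of $C$. Then: (a) (validity) for every feasible point $(p^g,q^g,c,s,\theta)$ of the OPF formulation in the context, there exist values of the auxiliary variables such that all constraints (1)–(4) hold for every cycle of the basis; and (b) every $(p^g,q^g,c,s)$ satisfying (ALT), the coupling equalities $c_{ij}^2+s_{ij}^2=c_{ii}c_{jj}$ for all lines, and constraints (1)–(4) (for some values of the auxiliary variables)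 satisfies, for each cycle $C$ in the basis, $\sum_{(i,j)\in C}\operatorname{atan2}(s_{ij},c_{ij})=2\pi k$ for some integer $k$ (sum over the oriented edges of $C$).
   Context: Data: finite bus set $\mathcal B$, line set $\mathcal L$ (unordered pairs of distinct buses; variables $c_{ij},s_{ij}$ for both orientations of each line), $\delta(i)$ the neighbors of $i$, generator set $\mathcal G\subseteq\mathcal B$, reals $G_{ij},B_{ij}$ (lines), $G_{ii},B_{ii}$ (buses), demands $p_i^d,q_i^d$, voltage bounds $0<\underline V_i\le\overline V_i$, generator bounds $p_i^{\min}\le p_i^{\max}$, $q_i^{\min}\le q_i^{\max}$ ($i\in\mathcal G$). Variables $p_i^g,q_i^g$ for $i\in\mathcal G$, with $p_i^g=q_i^g=0$ for $i\notin\mathcal G$. (ALT): $p_i^g-p_i^d=G_{ii}c_{ii}+\sum_{j\in\delta(i)}(G_{ij}c_{ij}-B_{ij}s_{ij})$, $q_i^g-q_i^d=-B_{ii}c_{ii}+\sum_{j\in\delta(i)}(-B_{ij}c_{ij}-G_{ij}s_{ij})$, $\underline V_i^2\le c_{ii}\le\overline V_i^2$ ($i\in\mathcal B$); $c_{ij}=c_{ji}$, $s_{ij}=-s_{ji}$ (lines); $p_i^{\min}\le p_i^g\le p_i^{\max}$, $q_i^{\min}\le q_i^g\le q_i^{\max}$ ($i\in\mathcal G$). OPF formulation: variables $(p^g,q^g,c,s,\theta)$ with $\theta\in\mathbb R^{\mathcal B}$ satisfying (ALT), $c_{ij}^2+s_{ij}^2=c_{ii}c_{jj}$ and $\theta_j-\theta_i=\operatorname{atan2}(s_{ij},c_{ij})$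 for every line $(i,j)$. Here $\operatorname{atan2}(y,x)\in(-\pi,\pi]$ is the angle of the point $(x,y)\neq(0,0)$. A cycle basis is a basis of the cycle space of the graph consisting of cycles. *)

theory Defs
  imports "HOL-Analysis.Analysis"
begin

definition atan2 :: "real \<Rightarrow> real \<Rightarrow> real" where
  "atan2 y x = Arg (Complex x y)"

definition network :: "'b set \<Rightarrow> 'b set set \<Rightarrow> bool" where
  "network B L \<longleftrightarrow> finite B \<and> (\<forall>e\<in>L. \<exists>i j. e = {i, j} \<and> i \<noteq> j \<and> i \<in> B \<and> j \<in> B)"

definition nbrs :: "'b set set \<Rightarrow> 'b \<Rightarrow> 'b set" where
  "nbrs L i = {j. {i, j} \<in> L \<and> j \<noteq> i}"

definition is_cycle :: "'b set \<Rightarrow> 'b set set \<Rightarrow> 'b list \<Rightarrow> bool" where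
  "is_cycle B L vs \<longleftrightarrow> length vs \<ge> 3 \<and> distinct vs \<and> set vs \<subseteq> B \<and>
     (\<forall>i < length vs. {vs ! i, vs ! ((i + 1) mod length vs)} \<in> L)"

definition cycle_edges :: "'b list \<Rightarrow> 'b set set" where
  "cycle_edges vs = {{vs ! i, vs ! ((i + 1) mod length vs)} | i. i < length vs}"

text \<open>Cycle space over GF(2): edge sets with all degrees even; sums are symmetric differences.\<close>
definition even_subgraph :: "'b set \<Rightarrow> 'b set set \<Rightarrow> 'b set set \<Rightarrow> bool" where
  "even_subgraph B L F \<longleftrightarrow> F \<subseteq> L \<and> (\<forall>v\<in>B. even (card {e\<in>F. v \<in> e}))"

definition symdiff_sum :: "(nat \<Rightarrow> 'a set) \<Rightarrow> nat set \<Rightarrow> 'a set" where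
  "symdiff_sum E I = {x. odd (card {i\<in>I. x \<in> E i})}"

definition cycle_basis :: "'b set \<Rightarrow> 'b set set \<Rightarrow> 'b list list \<Rightarrow> bool" where
  "cycle_basis B L Cs \<longleftrightarrow>
     (\<forall>C\<in>set Cs. is_cycle B L C) \<and>
     (\<forall>I \<subseteq> {..<length Cs}. symdiff_sum (\<lambda>k. cycle_edges (Cs ! k)) I = {} \<longrightarrow> I = {}) \<and>
     (\<forall>F. even_subgraph B L F \<longrightarrow>
        (\<exists>I \<subseteq> {..<length Cs}. symdiff_sum (\<lambda>k. cycle_edges (Cs ! k)) I = F))"

definition ALT ::
  "'b set \<Rightarrow> 'b set set \<Rightarrow> 'b set \<Rightarrow> ('b \<Rightarrow> 'b \<Rightarrow> real) \<Rightarrow> ('b \<Rightarrow> 'b \<Rightarrow> real) \<Rightarrow>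
   ('b \<Rightarrow> real) \<Rightarrow> ('b \<Rightarrow> real) \<Rightarrow> ('b \<Rightarrow> real) \<Rightarrow> ('b \<Rightarrow> real) \<Rightarrow>
   ('b \<Rightarrow> real) \<Rightarrow> ('b \<Rightarrow> real) \<Rightarrow> ('b \<Rightarrow> real) \<Rightarrow> ('b \<Rightarrow> real) \<Rightarrow>
   ('b \<Rightarrow> real) \<Rightarrow> ('b \<Rightarrow> real) \<Rightarrow> ('b \<Rightarrow> 'b \<Rightarrow> real) \<Rightarrow> ('b \<Rightarrow> 'b \<Rightarrow> real) \<Rightarrow> bool" where
  "ALT B L G Gm Bm pd qd Vmin Vmax pmin pmax qmin qmax pg qg c s \<longleftrightarrow>
     (\<forall>i\<in>B. pg i - pd i = Gm i i * c i i + (\<Sum>j\<in>nbrs L i. Gm i j * c i j - Bm i j * s i j)) \<and>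
     (\<forall>i\<in>B. qg i - qd i = - Bm i i * c i i + (\<Sum>j\<in>nbrs L i. - Bm i j * c i j - Gm i j * s i j)) \<and>
     (\<forall>i\<in>B. (Vmin i)\<^sup>2 \<le> c i i \<and> c i i \<le> (Vmax i)\<^sup>2) \<and>
     (\<forall>i j. {i, j} \<in> L \<longrightarrow> c i j = c j i \<and> s i j = - s j i) \<and>
     (\<forall>i\<in>G. pmin i \<le> pg i \<and> pg i \<le> pmax i \<and> qmin i \<le> qg i \<and> qg i \<le> qmax i) \<and>
     (\<forall>i\<in>B - G. pg i = 0 \<and> qg i = 0)"

definition coupling :: "'b set set \<Rightarrow> ('b \<Rightarrow> 'b \<Rightarrow> real) \<Rightarrow> ('b \<Rightarrow> 'b \<Rightarrow> real) \<Rightarrow> bool" where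
  "coupling L c s \<longleftrightarrow> (\<forall>i j. {i, j} \<in> L \<longrightarrow> (c i j)\<^sup>2 + (s i j)\<^sup>2 = c i i * c j j)"

definition angle_cons :: "'b set set \<Rightarrow> ('b \<Rightarrow> 'b \<Rightarrow> real) \<Rightarrow> ('b \<Rightarrow> 'b \<Rightarrow> real) \<Rightarrow> ('b \<Rightarrow> real) \<Rightarrow> bool" where
  "angle_cons L c s \<theta> \<longleftrightarrow>
     (\<forall>e\<in>L. \<exists>i j. e = {i, j} \<and> \<theta> j - \<theta> i = atan2 (s i j) (c i j))"

text \<open>Cycle constraints (1)-(4) for a cycle vs (bus k = vs!(k-1), k = 1..n), with auxiliary
  variables ct k = c~_{1,k}, st k = s~_{1,k} (only the values at even k are used).\<close>
definition cycle_cons ::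
  "('b \<Rightarrow> 'b \<Rightarrow> real) \<Rightarrow> ('b \<Rightarrow> 'b \<Rightarrow> real) \<Rightarrow> 'b list \<Rightarrow> (nat \<Rightarrow> real) \<Rightarrow> (nat \<Rightarrow> real) \<Rightarrow> bool" where
  "cycle_cons c s vs ct st \<longleftrightarrow>
   (let n = length vs;
        C = (\<lambda>k m. c (vs ! (k - 1)) (vs ! (m - 1)));
        S = (\<lambda>k m. s (vs ! (k - 1)) (vs ! (m - 1)));
        nx = (\<lambda>k. if k = n then 1 else k + 1)
    in
    (n = 3 \<longrightarrow>
       S 1 2 * C 3 3 + C 2 3 * S 3 1 + S 2 3 * C 3 1 = 0 \<and>
       C 1 2 * C 3 3 - C 2 3 * C 3 1 + S 2 3 * S 3 1 = 0) \<and>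
    (n = 4 \<longrightarrow>
       S 1 2 * C 3 4 + C 1 2 * S 3 4 + S 2 3 * C 4 1 + C 2 3 * S 4 1 = 0 \<and>
       C 1 2 * C 3 4 - S 1 2 * S 3 4 - C 2 3 * C 4 1 + S 2 3 * S 4 1 = 0) \<and>
    (odd n \<and> 5 \<le> n \<longrightarrow>
       ct 2 = C 1 2 \<and> st 2 = S 1 2 \<and>
       (\<forall>i\<in>{2..(n - 1) div 2}.
          ct (2*i-2) * C (2*i-1) (2*i) - st (2*i-2) * S (2*i-1) (2*i)
            - ct (2*i) * C (2*i-2) (2*i-1) - st (2*i) * S (2*i-2) (2*i-1) = 0 \<and>
          st (2*i-2) * C (2*i-1) (2*i) + ct (2*i-2) * S (2*i-1) (2*i)
            - st (2*i) * C (2*i-2) (2*i-1) + ct (2*i) * S (2*i-2) (2*i-1) = 0) \<and>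
       ct (n-1) * C (n-1) n - st (n-1) * S (n-1) n - C n 1 * C (n-1) (n-1) = 0 \<and>
       st (n-1) * C (n-1) n + ct (n-1) * S (n-1) n + S n 1 * C (n-1) (n-1) = 0 \<and>
       (\<forall>i. even i \<and> 2 \<le> i \<and> i \<le> n - 1 \<longrightarrow> (st i)\<^sup>2 + (ct i)\<^sup>2 = C 1 1 * C i i) \<and>
       (\<forall>k\<in>{1..n}. (C k (nx k))\<^sup>2 + (S k (nx k))\<^sup>2 = C k k * C (nx k) (nx k))) \<and>
    (even n \<and> 6 \<le> n \<longrightarrow>
       ct 2 = C 1 2 \<and> st 2 = S 1 2 \<and> ct n = C 1 n \<and> st n = S 1 n \<and>
       (\<forall>i\<in>{2..n div 2}.
          ct (2*i-2) * C (2*i-1) (2*i) - st (2*i-2) * S (2*i-1) (2*i)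
            - ct (2*i) * C (2*i-2) (2*i-1) - st (2*i) * S (2*i-2) (2*i-1) = 0 \<and>
          st (2*i-2) * C (2*i-1) (2*i) + ct (2*i-2) * S (2*i-1) (2*i)
            - st (2*i) * C (2*i-2) (2*i-1) + ct (2*i) * S (2*i-2) (2*i-1) = 0) \<and>
       (\<forall>i. even i \<and> 2 \<le> i \<and> i \<le> n - 1 \<longrightarrow> (st i)\<^sup>2 + (ct i)\<^sup>2 = C 1 1 * C i i) \<and>
       (\<forall>k\<in>{1..n}. (C k (nx k))\<^sup>2 + (S k (nx k))\<^sup>2 = C k k * C (nx k) (nx k))))"

definition cycle_angle_sum :: "('b \<Rightarrow> 'b \<Rightarrow> real) \<Rightarrow> ('b \<Rightarrow> 'b \<Rightarrow> real) \<Rightarrow> 'b list \<Rightarrow> real" where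
  "cycle_angle_sum c s vs =
     (\<Sum>i<length vs. atan2 (s (vs ! i) (vs ! ((i + 1) mod length vs)))
                          (c (vs ! i) (vs ! ((i + 1) mod length vs))))"

end

theory Submission
  imports Defs
begin

text \<open>
  Write \<open>W\<^sub>i\<^sub>j = c\<^sub>i\<^sub>j + i s\<^sub>i\<^sub>j\<close>. Each pair of real constraints in (1)--(4) is the real and
  imaginary part of one complex equation between products of the \<open>W\<^sub>i\<^sub>j\<close> and their conjugates.
  At a feasible OPF point \<open>W\<^sub>i\<^sub>j = conj(V\<^sub>i) V\<^sub>j\<close> for the voltage phasors
  \<open>V\<^sub>v = sqrt(c\<^sub>v\<^sub>v) e^(i\<theta>\<^sub>v)\<close>, and with the auxiliary variables
  \<open>c\<^sup>~\<^sub>1\<^sub>k + i s\<^sup>~\<^sub>1\<^sub>k = conj(V\<^sub>1) V\<^sub>k\<close> all those complex equations become ring identities.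
  Conversely, the constraints telescope along the cycle through the auxiliary variables and show
  that the product of the \<open>W\<^sub>i\<^sub>j\<close> around the cycle is a positive multiple of some \<open>|z|\<^sup>2\<close>,
  hence a positive real number; its argument, the sum of the \<open>atan2\<close> values, is then a multiple
  of \<open>2\<pi>\<close>.
\<close>

lemma sgn_prod: "sgn (\<Prod>i\<in>I. w i) = (\<Prod>i\<in>I. sgn (w i :: 'a :: real_normed_field))"
  by (induction I rule: infinite_finite_induct) (simp_all add: Real_Vector_Spaces.sgn_mult)

lemma sum_Arg_eq_2pi_multiple:
  fixes w :: "'a \<Rightarrow> complex"
  assumes "finite I" and nonzero: "\<forall>i\<in>I. w i \<noteq> 0" and positive: "(\<Prod>i\<in>I. w i) = complex_of_real R" "R > 0"
  shows "\<exists>k::int. (\<Sum>i\<in>I. Arg (w i)) = 2 * pi * of_int k"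
proof -
  have "exp (\<i> * complex_of_real (\<Sum>i\<in>I. Arg (w i))) = (\<Prod>i\<in>I. cis (Arg (w i)))"
    using \<open>finite I\<close> by (simp add: sum_distrib_left exp_sum cis_conv_exp)
  also have "\<dots> = sgn (\<Prod>i\<in>I. w i)"
    using nonzero by (simp add: sgn_prod cis_Arg)
  also have "\<dots> = 1"
    using positive by (simp add: sgn_of_real)
  finally obtain k where "(\<Sum>i\<in>I. Arg (w i)) = real_of_int (2 * k) * pi"
    by (auto simp: exp_eq_1)
  then show ?thesis
    by (intro exI[of _ k]) simp
qed

lemma positive_real_if_mult_eq_cnj_mult_self:
  assumes "complex_of_real r * P = complex_of_real a * (cnj z * z)" "r > 0" "a > 0" "z \<noteq> 0"
  shows "\<exists>R>0. P = complex_of_real R"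
proof -
  have "cnj z * z = complex_of_real ((cmod z)\<^sup>2)"
    using complex_norm_square[of z] by (simp add: mult.commute)
  then have "complex_of_real r * P = complex_of_real (a * (cmod z)\<^sup>2)"
    using assms(1) by simp
  then have "P = complex_of_real (a * (cmod z)\<^sup>2 / r)"
    using \<open>r > 0\<close> by (simp add: field_simps)
  then show ?thesis
    using assms(2-4) by (intro exI[of _ "a * (cmod z)\<^sup>2 / r"]) simp
qed

lemma telescoping_chain:
  fixes w T :: "nat \<Rightarrow> complex"
  assumes start: "T 2 = w 0"
    and recurrence: "\<forall>i\<in>{2..m}. T (2*i-2) * w (2*i-2) = T (2*i) * cnj (w (2*i-3))"
    and nonzero: "\<forall>i\<in>{2..m}. w (2*i-3) \<noteq> 0"
    and "1 \<le> j" "j \<le> m"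
  shows "\<exists>r>0. T (2*j) = complex_of_real r * (\<Prod>i<2*j-1. w i)"
  using \<open>1 \<le> j\<close> \<open>j \<le> m\<close>
proof (induction j rule: dec_induct)
  case base
  then show ?case
    using start by (intro exI[of _ 1]) simp
next
  case (step j)
  then obtain r where "r > 0" and T_j: "T (2*j) = complex_of_real r * (\<Prod>i<2*j-1. w i)"
    by auto
  have "Suc j \<in> {2..m}"
    using step by simp
  then have "T (2*Suc j - 2) * w (2*Suc j - 2) = T (2*Suc j) * cnj (w (2*Suc j - 3))"
    and "w (2*Suc j - 3) \<noteq> 0"
    using recurrence nonzero by blast+
  then have rel: "T (2*j) * w (2*j) = T (2*Suc j) * cnj (w (2*j-1))" and "w (2*j-1) \<noteq> 0"
    by (simp_all add: numeral_3_eq_3)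
  then have norm_pos: "(cmod (w (2*j-1)))\<^sup>2 > 0"
    by simp
  have split: "(\<Prod>i<2*Suc j-1. w i) = (\<Prod>i<2*j-1. w i) * w (2*j-1) * w (2*j)"
  proof -
    have "2*Suc j - 1 = Suc (Suc (2*j-1))" "2*j = Suc (2*j-1)"
      using \<open>1 \<le> j\<close> by simp_all
    then show ?thesis
      by (metis prod.lessThan_Suc)
  qed
  have "T (2*Suc j) * complex_of_real ((cmod (w (2*j-1)))\<^sup>2) = complex_of_real r * (\<Prod>i<2*Suc j-1. w i)"
    using rel T_j unfolding split complex_norm_square by (simp add: algebra_simps)
  then have "T (2*Suc j) = complex_of_real (r / (cmod (w (2*j-1)))\<^sup>2) * (\<Prod>i<2*Suc j-1. w i)"
    using norm_pos by (simp add: field_simps)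
  then show ?case
    using \<open>r > 0\<close> norm_pos by (intro exI[of _ "r / (cmod (w (2*j-1)))\<^sup>2"]) simp
qed

lemma odd_cycle_product_positive:
  fixes w T :: "nat \<Rightarrow> complex"
  assumes "odd n" "5 \<le> n" and nonzero: "\<forall>k<n. w k \<noteq> 0" and "D > 0"
    and start: "T 2 = w 0"
    and recurrence: "\<forall>i\<in>{2..(n-1) div 2}. T (2*i-2) * w (2*i-2) = T (2*i) * cnj (w (2*i-3))"
    and closing: "T (n-1) * w (n-2) = cnj (w (n-1)) * complex_of_real D"
  shows "\<exists>R>0. (\<Prod>k<n. w k) = complex_of_real R"
proof -
  define m where "m = (n-1) div 2"
  have m: "2 \<le> m" "2*m = n - 1" "n - 1 - 1 = n - 2"
    using assms(1,2) by (auto simp: m_def)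
  have "\<forall>i\<in>{2..m}. w (2*i-3) \<noteq> 0"
    using nonzero m by auto
  then obtain r where "r > 0" and T_2m: "T (2*m) = complex_of_real r * (\<Prod>k<2*m-1. w k)"
    using telescoping_chain[OF start recurrence[folded m_def], of m] m by auto
  have T_last: "T (n-1) = complex_of_real r * (\<Prod>k<n-2. w k)"
    using T_2m unfolding m(2,3) .
  have "n = Suc (Suc (n-2))" "n-1 = Suc (n-2)"
    using assms(2) by simp_all
  then have "(\<Prod>k<n. w k) = (\<Prod>k<n-2. w k) * w (n-2) * w (n-1)"
    by (metis prod.lessThan_Suc)
  then have "complex_of_real r * (\<Prod>k<n. w k) = T (n-1) * w (n-2) * w (n-1)"
    unfolding T_last by (simp add: mult_ac)
  also have "\<dots> = complex_of_real D * (cnj (w (n-1)) * w (n-1))"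
    unfolding closing by (simp add: mult_ac)
  finally show ?thesis
    by (rule positive_real_if_mult_eq_cnj_mult_self) (use \<open>r > 0\<close> \<open>D > 0\<close> assms(2) nonzero in auto)
qed

lemma even_cycle_product_positive:
  fixes w T :: "nat \<Rightarrow> complex"
  assumes "even n" "6 \<le> n" and nonzero: "\<forall>k<n. w k \<noteq> 0"
    and start: "T 2 = w 0"
    and recurrence: "\<forall>i\<in>{2..n div 2}. T (2*i-2) * w (2*i-2) = T (2*i) * cnj (w (2*i-3))"
    and closing: "T n = cnj (w (n-1))"
  shows "\<exists>R>0. (\<Prod>k<n. w k) = complex_of_real R"
proof -
  define m where "m = n div 2"
  have m: "2 \<le> m" "2*m = n"
    using assms(1,2) by (auto simp: m_def)
  have "\<forall>i\<in>{2..m}. w (2*i-3) \<noteq> 0"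
    using nonzero m by auto
  then obtain r where "r > 0" and T_2m: "T (2*m) = complex_of_real r * (\<Prod>k<2*m-1. w k)"
    using telescoping_chain[OF start recurrence[folded m_def], of m] m by auto
  have T_last: "T n = complex_of_real r * (\<Prod>k<n-1. w k)"
    using T_2m unfolding m(2) .
  have "n = Suc (n-1)"
    using assms(2) by simp
  then have "(\<Prod>k<n. w k) = (\<Prod>k<n-1. w k) * w (n-1)"
    by (metis prod.lessThan_Suc)
  then have "complex_of_real r * (\<Prod>k<n. w k) = complex_of_real 1 * (cnj (w (n-1)) * w (n-1))"
    using T_last closing by (simp add: mult_ac)
  then show ?thesis
    by (rule positive_real_if_mult_eq_cnj_mult_self) (use \<open>r > 0\<close> assms(2) nonzero in auto)
qed

definition edge_cx :: "('b \<Rightarrow> 'b \<Rightarrow> real) \<Rightarrow> ('b \<Rightarrow> 'b \<Rightarrow> real) \<Rightarrow> 'b \<Rightarrow> 'b \<Rightarrow> complex" where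
  "edge_cx c s u v = Complex (c u v) (s u v)"

text \<open>
  The complex form of \<open>cycle_cons\<close>, in the paper's 1-based bus labels: \<open>X k m\<close> is the complex
  line variable of buses \<open>k, m\<close>, \<open>D k\<close> is \<open>c\<^sub>k\<^sub>k\<close> and \<open>T k = c\<^sup>~\<^sub>1\<^sub>k + i s\<^sup>~\<^sub>1\<^sub>k\<close>.
\<close>
definition cycle_cons_cx ::
  "('b \<Rightarrow> 'b \<Rightarrow> complex) \<Rightarrow> ('b \<Rightarrow> real) \<Rightarrow> 'b list \<Rightarrow> (nat \<Rightarrow> complex) \<Rightarrow> bool" where
  "cycle_cons_cx W d vs T \<longleftrightarrow>
   (let n = length vs;
        X = (\<lambda>k m. W (vs ! (k - 1)) (vs ! (m - 1)));
        D = (\<lambda>k. d (vs ! (k - 1)));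
        nx = (\<lambda>k. if k = n then 1 else k + 1);
        moduli = (\<forall>i. even i \<and> 2 \<le> i \<and> i \<le> n - 1 \<longrightarrow> (cmod (T i))\<^sup>2 = D 1 * D i) \<and>
                 (\<forall>k\<in>{1..n}. (cmod (X k (nx k)))\<^sup>2 = D k * D (nx k))
    in
    (n = 3 \<longrightarrow> X 1 2 * of_real (D 3) = cnj (X 2 3 * X 3 1)) \<and>
    (n = 4 \<longrightarrow> X 1 2 * X 3 4 = cnj (X 2 3 * X 4 1)) \<and>
    (odd n \<and> 5 \<le> n \<longrightarrow>
       T 2 = X 1 2 \<and>
       (\<forall>i\<in>{2..(n - 1) div 2}. T (2*i-2) * X (2*i-1) (2*i) = T (2*i) * cnj (X (2*i-2) (2*i-1))) \<and>
       T (n-1) * X (n-1) n = cnj (X n 1) * of_real (D (n-1)) \<and> moduli) \<and>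
    (even n \<and> 6 \<le> n \<longrightarrow>
       T 2 = X 1 2 \<and> T n = X 1 n \<and>
       (\<forall>i\<in>{2..n div 2}. T (2*i-2) * X (2*i-1) (2*i) = T (2*i) * cnj (X (2*i-2) (2*i-1))) \<and>
       moduli))"

lemma cycle_cons_iff_cycle_cons_cx:
  "cycle_cons c s vs ct st \<longleftrightarrow>
   cycle_cons_cx (edge_cx c s) (\<lambda>v. c v v) vs (\<lambda>k. Complex (ct k) (st k))"
proof -
  have triangle: "Complex a b * complex_of_real r = cnj (Complex c d * Complex e f) \<longleftrightarrow>
      b*r + c*f + d*e = 0 \<and> a*r - c*e + d*f = 0" for a b c d e f r
    by (auto simp: complex_eq_iff)
  have square: "Complex a b * Complex c d = cnj (Complex e f * Complex g h) \<longleftrightarrow>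
      b*c + a*d + f*g + e*h = 0 \<and> a*c - b*d - e*g + f*h = 0" for a b c d e f g h
    by (auto simp: complex_eq_iff)
  have step: "Complex a b * Complex c d = Complex e f * cnj (Complex g h) \<longleftrightarrow>
      a*c - b*d - e*g - f*h = 0 \<and> b*c + a*d - f*g + e*h = 0" for a b c d e f g h
    by (auto simp: complex_eq_iff)
  have close: "Complex a b * Complex c d = cnj (Complex e f) * complex_of_real r \<longleftrightarrow>
      a*c - b*d - e*r = 0 \<and> b*c + a*d + f*r = 0" for a b c d e f r
    by (auto simp: complex_eq_iff)
  show ?thesis
    unfolding cycle_cons_def cycle_cons_cx_def Let_def edge_cx_def
    by (simp only: triangle square step close complex.inject cmod_power2 complex.sel)
      (simp only: ac_simps)
qed

lemma cycle_cons_cx_edge_relations: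
  fixes W :: "'b \<Rightarrow> 'b \<Rightarrow> complex"
  assumes n: "length vs = n"
    and w: "\<And>k. w k = W (vs!k) (vs!((k+1) mod n))"
    and hermitian: "\<forall>u v. {u, v} \<in> cycle_edges vs \<longrightarrow> W v u = cnj (W u v)"
    and cons: "cycle_cons_cx W d vs T"
  shows "n = 3 \<Longrightarrow> w 0 * complex_of_real (d (vs!2)) = cnj (w 1 * w 2)"
    and "n = 4 \<Longrightarrow> w 0 * w 2 = cnj (w 1 * w 3)"
    and "n \<ge> 5 \<Longrightarrow> T 2 = w 0"
    and "odd n \<Longrightarrow> n \<ge> 5 \<Longrightarrow>
           \<forall>i\<in>{2..(n-1) div 2}. T (2*i-2) * w (2*i-2) = T (2*i) * cnj (w (2*i-3))"
    and "odd n \<Longrightarrow> n \<ge> 5 \<Longrightarrow>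
           T (n-1) * w (n-2) = cnj (w (n-1)) * complex_of_real (d (vs!(n-2)))"
    and "even n \<Longrightarrow> n \<ge> 6 \<Longrightarrow>
           \<forall>i\<in>{2..n div 2}. T (2*i-2) * w (2*i-2) = T (2*i) * cnj (w (2*i-3))"
    and "even n \<Longrightarrow> n \<ge> 6 \<Longrightarrow> T n = cnj (w (n-1))"
proof -
  have w_step: "W (vs!k) (vs!Suc k) = w k" if "Suc k < n" for k
    using that by (simp add: w)
  have w_last: "W (vs!(n-1)) (vs!0) = w (n-1)" and w_last_rev: "W (vs!0) (vs!(n-1)) = cnj (w (n-1))"
    if "n > 0"
  proof -
    have "Suc (n-1) = n" "n-1 < n"
      using that by simp_all
    moreover have "{vs!(n-1), vs!((n-1+1) mod n)} \<in> cycle_edges vs"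
      using that n by (auto simp: cycle_edges_def)
    ultimately show "W (vs!(n-1)) (vs!0) = w (n-1)" "W (vs!0) (vs!(n-1)) = cnj (w (n-1))"
      using hermitian by (simp_all add: w)
  qed
  have chain_step: "T (2*i-2) * w (2*i-2) = T (2*i) * cnj (w (2*i-3))"
    if "n \<ge> 5" "2 \<le> i" "2*i \<le> n" for i
  proof -
    define p where "p = 2*i-3"
    have idx: "2*i-3 = p" "2*i-2 = Suc p" "2*i-1 = Suc (Suc p)" and "Suc (Suc p) < n"
      using that by (auto simp: p_def)
    have "odd n \<and> i \<le> (n-1) div 2 \<or> even n \<and> n \<ge> 6 \<and> i \<le> n div 2"
      using that by presburger
    then have "T (2*i-2) * W (vs!(2*i-2)) (vs!(2*i-1)) = T (2*i) * cnj (W (vs!(2*i-3)) (vs!(2*i-2)))"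
      using cons that by (auto simp: cycle_cons_cx_def n numeral_2_eq_2 numeral_3_eq_3)
    then show ?thesis
      using w_step[of p] w_step[of "Suc p"] \<open>Suc (Suc p) < n\<close> unfolding idx by simp
  qed
  show "w 0 * complex_of_real (d (vs!2)) = cnj (w 1 * w 2)" if "n = 3"
    using that cons w_step[of 0] w_step[of 1] w_last by (simp add: cycle_cons_cx_def n numeral_eq_Suc)
  show "w 0 * w 2 = cnj (w 1 * w 3)" if "n = 4"
    using that cons w_step[of 0] w_step[of 1] w_step[of 2] w_last
    by (simp add: cycle_cons_cx_def n numeral_eq_Suc)
  show "T 2 = w 0" if "n \<ge> 5"
  proof -
    have "odd n \<and> n \<ge> 5 \<or> even n \<and> n \<ge> 6"
      using that by presburger
    then show ?thesis
      using cons w_step[of 0] by (auto simp: cycle_cons_cx_def n)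
  qed
  show "\<forall>i\<in>{2..(n-1) div 2}. T (2*i-2) * w (2*i-2) = T (2*i) * cnj (w (2*i-3))" if "odd n" "n \<ge> 5"
    using chain_step that by auto
  show "T (n-1) * w (n-2) = cnj (w (n-1)) * complex_of_real (d (vs!(n-2)))" if "odd n" "n \<ge> 5"
  proof -
    have "n - 1 = Suc (n-2)"
      using that by simp
    then have "W (vs!(n-2)) (vs!(n-1)) = w (n-2)"
      using w_step[of "n-2"] that by simp
    moreover have "T (n-1) * W (vs!(n-2)) (vs!(n-1)) = cnj (W (vs!(n-1)) (vs!0)) * complex_of_real (d (vs!(n-2)))"
      using cons that by (simp add: cycle_cons_cx_def n numeral_2_eq_2)
    ultimately show ?thesis
      using w_last that by simp
  qed
  show "\<forall>i\<in>{2..n div 2}. T (2*i-2) * w (2*i-2) = T (2*i) * cnj (w (2*i-3))" if "even n" "n \<ge> 6"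
    using chain_step that by auto
  show "T n = cnj (w (n-1))" if "even n" "n \<ge> 6"
    using that cons w_last_rev by (simp add: cycle_cons_cx_def n)
qed

lemma cycle_cons_cx_product_positive:
  fixes W :: "'b \<Rightarrow> 'b \<Rightarrow> complex"
  assumes length: "length vs \<ge> 3"
    and nonzero: "\<forall>u v. {u, v} \<in> cycle_edges vs \<longrightarrow> W u v \<noteq> 0"
    and hermitian: "\<forall>u v. {u, v} \<in> cycle_edges vs \<longrightarrow> W v u = cnj (W u v)"
    and positive: "\<forall>v\<in>set vs. d v > 0"
    and cons: "cycle_cons_cx W d vs T"
  shows "\<exists>R>0. (\<Prod>k<length vs. W (vs!k) (vs!((k+1) mod length vs))) = complex_of_real R"
proof -
  define n where "n = length vs"
  define w where "w k = W (vs!k) (vs!((k+1) mod n))" for k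
  note relations = cycle_cons_cx_edge_relations[OF n_def[symmetric] w_def hermitian cons]
  have w_nonzero: "\<forall>k<n. w k \<noteq> 0"
    using nonzero by (auto simp: w_def cycle_edges_def n_def)
  have d_pos: "d (vs!k) > 0" if "k < n" for k
    using positive that by (simp add: n_def)
  have "n = 3 \<or> n = 4 \<or> odd n \<and> n \<ge> 5 \<or> even n \<and> n \<ge> 6"
    using length unfolding n_def by presburger
  then have "\<exists>R>0. (\<Prod>k<n. w k) = complex_of_real R"
  proof (elim disjE conjE)
    assume "n = 3"
    then have "complex_of_real (d (vs!2)) * (\<Prod>k<n. w k) = complex_of_real 1 * (cnj (w 1 * w 2) * (w 1 * w 2))"
      using relations(1) by (simp add: numeral_eq_Suc mult_ac)
    then show ?thesis
      by (rule positive_real_if_mult_eq_cnj_mult_self) (use \<open>n = 3\<close> d_pos w_nonzero in auto)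
  next
    assume "n = 4"
    then have "complex_of_real 1 * (\<Prod>k<n. w k) = complex_of_real 1 * (cnj (w 1 * w 3) * (w 1 * w 3))"
      using relations(2) by (simp add: numeral_eq_Suc mult_ac)
    then show ?thesis
      by (rule positive_real_if_mult_eq_cnj_mult_self) (use \<open>n = 4\<close> w_nonzero in auto)
  next
    assume "odd n" "n \<ge> 5"
    then show ?thesis
      using odd_cycle_product_positive[OF _ _ w_nonzero d_pos relations(3-5)] by simp
  next
    assume "even n" "n \<ge> 6"
    then show ?thesis
      using even_cycle_product_positive[OF _ _ w_nonzero relations(3,6,7)] by simp
  qed
  then show ?thesis
    by (simp add: w_def n_def)
qed

lemma cycle_cons_cx_of_phasors:
  fixes V :: "'b \<Rightarrow> complex"
  assumes W: "\<forall>u v. {u, v} \<in> cycle_edges vs \<longrightarrow> W u v = cnj (V u) * V v"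
    and d: "\<forall>v\<in>set vs. d v = (cmod (V v))\<^sup>2"
  shows "cycle_cons_cx W d vs (\<lambda>k. cnj (V (vs!0)) * V (vs!(k-1)))"
proof -
  define n where "n = length vs"
  have W_edge: "W (vs!k) (vs!((k+1) mod n)) = cnj (V (vs!k)) * V (vs!((k+1) mod n))"
    "W (vs!((k+1) mod n)) (vs!k) = cnj (V (vs!((k+1) mod n))) * V (vs!k)" if "k < n" for k
    using W that by (auto simp: cycle_edges_def n_def insert_commute)
  have W_step: "W (vs!k) (vs!Suc k) = cnj (V (vs!k)) * V (vs!Suc k)" if "Suc k < n" for k
    using W_edge(1)[of k] that by simp
  have W_last: "W (vs!(n-1)) (vs!0) = cnj (V (vs!(n-1))) * V (vs!0)"
    and W_last_rev: "W (vs!0) (vs!(n-1)) = cnj (V (vs!0)) * V (vs!(n-1))" if "n > 0"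
  proof -
    have "Suc (n-1) = n" "n-1 < n"
      using that by simp_all
    then show "W (vs!(n-1)) (vs!0) = cnj (V (vs!(n-1))) * V (vs!0)"
      "W (vs!0) (vs!(n-1)) = cnj (V (vs!0)) * V (vs!(n-1))"
      using W_edge[of "n-1"] by simp_all
  qed
  have d_nth: "d (vs!k) = (cmod (V (vs!k)))\<^sup>2" if "k < n" for k
    using d nth_mem[of k vs] that by (simp add: n_def)
  have d_cx: "complex_of_real (d (vs!k)) = cnj (V (vs!k)) * V (vs!k)" if "k < n" for k
    using d_nth[OF that] complex_norm_square[of "V (vs!k)"] by (simp add: mult.commute)
  have moduli_T: "(cmod (cnj (V (vs!0)) * V (vs!(i-1))))\<^sup>2 = d (vs!0) * d (vs!(i-1))"
    if "1 \<le> i" "i \<le> n" for i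
    using that d_nth[of 0] d_nth[of "i-1"] by (simp add: norm_mult power_mult_distrib)
  have moduli_W: "(cmod (W (vs!(k-1)) (vs!((if k = n then 1 else k+1) - 1))))\<^sup>2
                    = d (vs!(k-1)) * d (vs!((if k = n then 1 else k+1) - 1))" if "k \<in> {1..n}" for k
  proof -
    have "(if k = n then 1 else k+1) - 1 = (k-1+1) mod n" "k - 1 < n"
      using that by auto
    then show ?thesis
      using W_edge(1)[of "k-1"] d_nth[of "k-1"] d_nth[of "(k-1+1) mod n"] that
      by (simp add: norm_mult power_mult_distrib)
  qed
  have recurrence: "cnj (V (vs!0)) * V (vs!(2*i-3)) * W (vs!(2*i-2)) (vs!(2*i-1))
                     = cnj (V (vs!0)) * V (vs!(2*i-1)) * cnj (W (vs!(2*i-3)) (vs!(2*i-2)))"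
    if "2 \<le> i" "i \<le> n div 2" for i
  proof -
    define p where "p = 2*i-3"
    have idx: "2*i-3 = p" "2*i-2 = Suc p" "2*i-1 = Suc (Suc p)" and "Suc (Suc p) < n"
      using that by (auto simp: p_def)
    show ?thesis
      unfolding idx using W_step[of p] W_step[of "Suc p"] \<open>Suc (Suc p) < n\<close> by (simp add: mult_ac)
  qed
  have closing: "cnj (V (vs!0)) * V (vs!(n-2)) * W (vs!(n-2)) (vs!(n-1))
                   = cnj (W (vs!(n-1)) (vs!0)) * complex_of_real (d (vs!(n-2)))" if "n \<ge> 3"
  proof -
    have "n - 1 = Suc (n-2)"
      using that by simp
    then have "W (vs!(n-2)) (vs!(n-1)) = cnj (V (vs!(n-2))) * V (vs!(n-1))"
      using W_step[of "n-2"] that by simp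
    then show ?thesis
      using W_last d_cx[of "n-2"] that by (simp add: mult_ac)
  qed
  show ?thesis
    unfolding cycle_cons_cx_def Let_def n_def[symmetric]
  proof (intro conjI impI)
    show "W (vs!(1-1)) (vs!(2-1)) * complex_of_real (d (vs!(3-1)))
            = cnj (W (vs!(2-1)) (vs!(3-1)) * W (vs!(3-1)) (vs!(1-1)))" if "n = 3"
      using that W_step[of 0] W_step[of 1] W_last d_cx[of 2] by (simp add: numeral_eq_Suc mult_ac)
    show "W (vs!(1-1)) (vs!(2-1)) * W (vs!(3-1)) (vs!(4-1))
            = cnj (W (vs!(2-1)) (vs!(3-1)) * W (vs!(4-1)) (vs!(1-1)))" if "n = 4"
      using that W_step[of 0] W_step[of 1] W_step[of 2] W_last by (simp add: numeral_eq_Suc mult_ac)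
  qed (use W_step[of 0] W_last_rev recurrence closing moduli_T moduli_W div_le_mono[of "n-1" n 2] in
        \<open>auto simp: numeral_2_eq_2 numeral_3_eq_3\<close>)
qed

definition phasor :: "('b \<Rightarrow> 'b \<Rightarrow> real) \<Rightarrow> ('b \<Rightarrow> real) \<Rightarrow> 'b \<Rightarrow> complex" where
  "phasor c \<theta> v = rcis (sqrt (c v v)) (\<theta> v)"

lemma cnj_phasor_mult_phasor:
  "cnj (phasor c \<theta> i) * phasor c \<theta> j = rcis (sqrt (c i i) * sqrt (c j j)) (\<theta> j - \<theta> i)"
  by (simp add: phasor_def rcis_def cis_cnj cis_mult)

lemma edge_cx_swap:
  assumes "\<forall>i j. {i, j} \<in> L \<longrightarrow> c i j = c j i \<and> s i j = - s j i" and "{i, j} \<in> L"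
  shows "edge_cx c s j i = cnj (edge_cx c s i j)"
proof -
  have "c i j = c j i" "s i j = - s j i"
    using assms by blast+
  then show ?thesis
    by (simp add: edge_cx_def complex_eq_iff)
qed

lemma edge_cx_eq_cnj_phasor_mult_phasor:
  assumes hermitian: "\<forall>i j. {i, j} \<in> L \<longrightarrow> c i j = c j i \<and> s i j = - s j i"
    and coupling: "coupling L c s" and angles: "angle_cons L c s \<theta>" and "{i, j} \<in> L"
  shows "edge_cx c s i j = cnj (phasor c \<theta> i) * phasor c \<theta> j"
proof -
  obtain i0 j0 where e: "{i, j} = {i0, j0}" and angle: "\<theta> j0 - \<theta> i0 = atan2 (s i0 j0) (c i0 j0)"
    using angles \<open>{i, j} \<in> L\<close> unfolding angle_cons_def by blast
  have "{i0, j0} \<in> L"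
    using \<open>{i, j} \<in> L\<close> e by simp
  have "cmod (edge_cx c s i0 j0) = sqrt (c i0 i0) * sqrt (c j0 j0)"
    using coupling \<open>{i0, j0} \<in> L\<close> by (simp add: edge_cx_def coupling_def cmod_def real_sqrt_mult)
  moreover have "Arg (edge_cx c s i0 j0) = \<theta> j0 - \<theta> i0"
    using angle by (simp add: atan2_def edge_cx_def)
  ultimately have polar: "edge_cx c s i0 j0 = cnj (phasor c \<theta> i0) * phasor c \<theta> j0"
    using rcis_cmod_Arg[of "edge_cx c s i0 j0"] by (simp add: cnj_phasor_mult_phasor)
  from e consider "i = i0" "j = j0" | "i = j0" "j = i0"
    by (auto simp: doubleton_eq_iff)
  then show ?thesis
  proof cases
    case 2
    then show ?thesis
      using edge_cx_swap[OF hermitian \<open>{i0, j0} \<in> L\<close>] polar by (simp add: mult.commute)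
  qed (use polar in simp)
qed

lemma cycle_edges_subset:
  assumes "is_cycle B L vs"
  shows "cycle_edges vs \<subseteq> L"
  using assms by (auto simp: is_cycle_def cycle_edges_def)

lemma cycle_cons_of_phasors:
  assumes cycle: "is_cycle B L vs"
    and polar: "\<forall>i j. {i, j} \<in> L \<longrightarrow> edge_cx c s i j = cnj (phasor c \<theta> i) * phasor c \<theta> j"
    and diagonal: "\<forall>v\<in>B. c v v \<ge> 0"
  shows "cycle_cons c s vs
           (\<lambda>k. Re (cnj (phasor c \<theta> (vs!0)) * phasor c \<theta> (vs!(k-1))))
           (\<lambda>k. Im (cnj (phasor c \<theta> (vs!0)) * phasor c \<theta> (vs!(k-1))))"
proof -
  have "cycle_cons_cx (edge_cx c s) (\<lambda>v. c v v) vs (\<lambda>k. cnj (phasor c \<theta> (vs!0)) * phasor c \<theta> (vs!(k-1)))"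
  proof (rule cycle_cons_cx_of_phasors)
    show "\<forall>u v. {u, v} \<in> cycle_edges vs \<longrightarrow> edge_cx c s u v = cnj (phasor c \<theta> u) * phasor c \<theta> v"
      using polar cycle_edges_subset[OF cycle] by blast
    show "\<forall>v\<in>set vs. c v v = (cmod (phasor c \<theta> v))\<^sup>2"
      using diagonal cycle by (auto simp: is_cycle_def phasor_def)
  qed
  then show ?thesis
    by (simp only: cycle_cons_iff_cycle_cons_cx complex_surj)
qed

lemma cycle_angle_sum_2pi_multiple:
  assumes cycle: "is_cycle B L vs"
    and hermitian: "\<forall>i j. {i, j} \<in> L \<longrightarrow> c i j = c j i \<and> s i j = - s j i"
    and coupling: "coupling L c s"
    and diagonal: "\<forall>v\<in>B. c v v > 0"
    and cons: "cycle_cons c s vs ct st"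
  shows "\<exists>k::int. cycle_angle_sum c s vs = 2 * pi * of_int k"
proof -
  let ?w = "\<lambda>k. edge_cx c s (vs!k) (vs!((k+1) mod length vs))"
  have edges: "cycle_edges vs \<subseteq> L"
    by (rule cycle_edges_subset[OF cycle])
  have nonzero: "edge_cx c s u v \<noteq> 0" if "{u, v} \<in> cycle_edges vs" for u v
  proof -
    have "u \<in> set vs" "v \<in> set vs"
      using that by (auto simp: cycle_edges_def doubleton_eq_iff intro!: nth_mem mod_less_divisor)
    then have "u \<in> B" "v \<in> B"
      using cycle by (auto simp: is_cycle_def)
    then have "(c u v)\<^sup>2 + (s u v)\<^sup>2 > 0"
      using coupling edges that diagonal by (auto simp: coupling_def)
    then show ?thesis
      by (auto simp: edge_cx_def complex_eq_iff)
  qed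
  have "\<exists>R>0. (\<Prod>k<length vs. ?w k) = complex_of_real R"
  proof (rule cycle_cons_cx_product_positive)
    show "length vs \<ge> 3"
      using cycle by (simp add: is_cycle_def)
    show "\<forall>u v. {u, v} \<in> cycle_edges vs \<longrightarrow> edge_cx c s u v \<noteq> 0"
      using nonzero by blast
    show "\<forall>u v. {u, v} \<in> cycle_edges vs \<longrightarrow> edge_cx c s v u = cnj (edge_cx c s u v)"
      using edges edge_cx_swap[OF hermitian] by blast
    show "\<forall>v\<in>set vs. c v v > 0"
      using cycle diagonal by (auto simp: is_cycle_def)
    show "cycle_cons_cx (edge_cx c s) (\<lambda>v. c v v) vs (\<lambda>k. Complex (ct k) (st k))"
      using cons by (simp add: cycle_cons_iff_cycle_cons_cx)
  qed
  moreover have "\<forall>k<length vs. ?w k \<noteq> 0"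
    using nonzero by (auto simp: cycle_edges_def)
  ultimately show ?thesis
    using sum_Arg_eq_2pi_multiple[of "{..<length vs}" ?w]
    by (auto simp: cycle_angle_sum_def atan2_def edge_cx_def)
qed

lemma ALT_line_symmetry_and_voltage_bounds:
  assumes "ALT B L G Gm Bm pd qd Vmin Vmax pmin pmax qmin qmax pg qg c s"
  shows "\<forall>i j. {i, j} \<in> L \<longrightarrow> c i j = c j i \<and> s i j = - s j i"
    and "\<forall>v\<in>B. (Vmin v)\<^sup>2 \<le> c v v"
  using assms unfolding ALT_def by blast+

theorem proposition8:
  fixes B :: "'b set" and L :: "'b set set" and G :: "'b set"
    and Gm Bm :: "'b \<Rightarrow> 'b \<Rightarrow> real"
    and pd qd Vmin Vmax pmin pmax qmin qmax :: "'b \<Rightarrow> real"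
    and Cs :: "'b list list"
  assumes net: "network B L"
    and gen: "G \<subseteq> B"
    and vbounds: "\<forall>i\<in>B. 0 < Vmin i \<and> Vmin i \<le> Vmax i"
    and gbounds: "\<forall>i\<in>G. pmin i \<le> pmax i \<and> qmin i \<le> qmax i"
    and basis: "cycle_basis B L Cs"
  shows
    "(\<forall>pg qg c s \<theta>.
        ALT B L G Gm Bm pd qd Vmin Vmax pmin pmax qmin qmax pg qg c s \<and> coupling L c s \<and>
        angle_cons L c s \<theta> \<longrightarrow>
        (\<exists>ct st :: nat \<Rightarrow> nat \<Rightarrow> real.
           \<forall>m < length Cs. cycle_cons c s (Cs ! m) (ct m) (st m))) \<and>
     (\<forall>pg qg c s.
        ALT B L G Gm Bm pd qd Vmin Vmax pmin pmax qmin qmax pg qg c s \<and> coupling L c s \<and>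
        (\<exists>ct st :: nat \<Rightarrow> nat \<Rightarrow> real.
           \<forall>m < length Cs. cycle_cons c s (Cs ! m) (ct m) (st m)) \<longrightarrow>
        (\<forall>m < length Cs. \<exists>k :: int. cycle_angle_sum c s (Cs ! m) = 2 * pi * of_int k))"
proof (intro conjI allI impI)
  fix pg qg c s \<theta>
  assume feasible: "ALT B L G Gm Bm pd qd Vmin Vmax pmin pmax qmin qmax pg qg c s \<and> coupling L c s \<and>
        angle_cons L c s \<theta>"
  note alt = ALT_line_symmetry_and_voltage_bounds[OF feasible[THEN conjunct1]]
  have "\<forall>v\<in>B. c v v \<ge> 0"
    using alt(2) by (meson order_trans zero_le_power2)
  moreover have "\<forall>i j. {i, j} \<in> L \<longrightarrow> edge_cx c s i j = cnj (phasor c \<theta> i) * phasor c \<theta> j"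
    using edge_cx_eq_cnj_phasor_mult_phasor[OF alt(1)] feasible by blast
  moreover have "\<forall>m < length Cs. is_cycle B L (Cs ! m)"
    using basis by (simp add: cycle_basis_def)
  ultimately have "\<forall>m < length Cs. cycle_cons c s (Cs ! m)
      (\<lambda>k. Re (cnj (phasor c \<theta> (Cs!m!0)) * phasor c \<theta> (Cs!m!(k-1))))
      (\<lambda>k. Im (cnj (phasor c \<theta> (Cs!m!0)) * phasor c \<theta> (Cs!m!(k-1))))"
    using cycle_cons_of_phasors by blast
  then show "\<exists>ct st :: nat \<Rightarrow> nat \<Rightarrow> real. \<forall>m < length Cs. cycle_cons c s (Cs ! m) (ct m) (st m)"
    by (intro exI)
next
  fix pg qg c s m
  assume feasible: "ALT B L G Gm Bm pd qd Vmin Vmax pmin pmax qmin qmax pg qg c s \<and> coupling L c s \<and>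
        (\<exists>ct st :: nat \<Rightarrow> nat \<Rightarrow> real. \<forall>m < length Cs. cycle_cons c s (Cs ! m) (ct m) (st m))"
    and "m < length Cs"
  note alt = ALT_line_symmetry_and_voltage_bounds[OF feasible[THEN conjunct1]]
  have "\<forall>v\<in>B. c v v > 0"
    using alt(2) vbounds by (meson less_le_trans zero_less_power)
  moreover have "is_cycle B L (Cs ! m)"
    using basis \<open>m < length Cs\<close> by (simp add: cycle_basis_def)
  ultimately show "\<exists>k :: int. cycle_angle_sum c s (Cs ! m) = 2 * pi * of_int k"
    using cycle_angle_sum_2pi_multiple alt(1) feasible \<open>m < length Cs\<close> by blast
qed

end
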